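(* Let $S$ be the $3\times 8$ matrix \[ S=\begin{bmatrix} 0 & \epsilon_1 & 0 & 0 & \epsilon_2 & \epsilon_3 & 0 & \epsilon_4 \\ 0 & 0 & -1 & 0 & -1 & 0 & -1 & -1 \\ 0 & 0 & 0 & -1 & 0 & -1 & -1 & -1 \end{bmatrix}, \] where $\epsilon_1,\epsilon_2,\epsilon_3,\epsilon_4\in\{-1,1\}$ and at least one $\epsilon_i$ equals $1$. Let $\sigma=(\sigma_1,\sigma_2,\sigma_3,\sigma_4)\in\{+,-\}^4$ with $\sigma_i$ the sign of $\epsilon_i$, and let $r\in[0,1)^3$ be such that $r+S$ is totally $1$-submodular. (i) If $\sigma \in \{(+,-,+,-),(-,+,-,+)\}$, then $r \in \mathrm{conv}\{(0,\tfrac14,\tfrac12)^\intercal,(0,\tfrac34,\tfrac12)^\intercal\}$. (ii) If $\sigma \in \{(+,+,-,-),(-,-,+,+)\}$, then $r \in \mathrm{conv}\{(0,\tfrac12,\tfrac14)^\intercal,(0,\tfrac12,\tfrac34)^\intercal\}$. (iii) If $\sigma$ is none of the four sign vectors listed in (i) and (ii), then $r=(0,\tfrac12,\tfrac12)^\intercal$.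
   Context: A real matrix is totally $1$-submodular if every square submatrix (of every size) has determinant of absolute value at most $1$. For $r\in\mathbb{R}^3$, $r+S$ denotes the matrix obtained by adding $r$ to every column of $S$. (Such $S$ are exactly the Sauer Matrices of size 3 and type $(1,2)$: each subset of $\{1,2,3\}$ is the support of exactly one column, and exactly the first row contains an entry equal to $1$.) *)

theory Defs
  imports "HOL-Analysis.Analysis" "Jordan_Normal_Form.DL_Submatrix" "Jordan_Normal_Form.Determinant"
begin

definition tot_1_submod :: "real mat \<Rightarrow> bool" where
  "tot_1_submod A \<longleftrightarrow>
     (\<forall>I J. I \<subseteq> {0..<dim_row A} \<longrightarrow> J \<subseteq> {0..<dim_col A} \<longrightarrow> card I = card J \<longrightarrow>
        \<bar>Determinant.det (submatrix A I J)\<bar> \<le> 1)"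

definition sauer_S :: "real \<Rightarrow> real \<Rightarrow> real \<Rightarrow> real \<Rightarrow> real mat" where
  "sauer_S e1 e2 e3 e4 = mat_of_rows_list 8
     [[0, e1, 0, 0, e2, e3, 0, e4],
      [0, 0, -1, 0, -1, 0, -1, -1],
      [0, 0, 0, -1, 0, -1, -1, -1]]"

definition add_col :: "real \<times> real \<times> real \<Rightarrow> real mat \<Rightarrow> real mat" where
  "add_col r S = mat (dim_row S) (dim_col S)
     (\<lambda>(i,j). S $$ (i,j) + (if i = 0 then fst r else if i = 1 then fst (snd r) else snd (snd r)))"

end

theory Submission
  imports Defs
begin

(* Write r = (a, b, c). Only the first row of S contains the signs, so the entries a + e_i of
   r + S force a = 0 once some e_i equals 1. With a = 0, every minor of r + S is affine in (b, c).
   Two columns whose first entries are opposite signs give a 2x2 minor 2b, 2(b - 1), 2c or 2(c - 1),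
   bounding b or c by 1/2 from one side; suitable 3x3 minors supply the missing bounds. Only for
   the alternating and the paired sign patterns does one coordinate stay free, within [1/4, 3/4]. *)

lemma pick_sorted_list:
  assumes "sorted_wrt (<) xs" "k < length xs"
  shows "pick (set xs) k = xs ! k"
proof -
  have nth_less_iff: "xs ! i < xs ! j \<longleftrightarrow> i < j" if "i < length xs" "j < length xs" for i j
    using that sorted_wrt_nth_less[OF assms(1), of i j] sorted_wrt_nth_less[OF assms(1), of j i]
    by (cases i j rule: linorder_cases) auto
  have "{a \<in> set xs. a < xs ! k} = (!) xs ` {..<k}"
  proof (intro equalityI subsetI)
    fix a
    assume "a \<in> {a \<in> set xs. a < xs ! k}"
    then obtain i where "i < length xs" "a = xs ! i" "xs ! i < xs ! k"
      by (auto simp: in_set_conv_nth)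
    then show "a \<in> (!) xs ` {..<k}"
      using assms(2) by (auto simp: nth_less_iff)
  next
    fix a
    assume "a \<in> (!) xs ` {..<k}"
    then show "a \<in> {a \<in> set xs. a < xs ! k}"
      using assms(2) by (auto simp: nth_less_iff)
  qed
  moreover have "inj_on ((!) xs) {..<k}"
    using assms by (intro inj_on_nth) (auto simp: strict_sorted_iff)
  ultimately have "card {a \<in> set xs. a < xs ! k} = k"
    by (simp add: card_image)
  then show ?thesis
    using pick_card_in_set[of "xs ! k" "set xs"] assms(2) by simp
qed

lemma submatrix_sorted_lists:
  assumes "sorted_wrt (<) is" "sorted_wrt (<) js"
    and "set is \<subseteq> {..<dim_row A}" "set js \<subseteq> {..<dim_col A}"
  shows "submatrix A (set is) (set js) = mat (length is) (length js) (\<lambda>(k, l). A $$ (is ! k, js ! l))"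
  unfolding submatrix_def
proof (rule cong_mat)
  have "{i. i < dim_row A \<and> i \<in> set is} = set is" "{j. j < dim_col A \<and> j \<in> set js} = set js"
    using assms(3,4) by auto
  then show "card {i. i < dim_row A \<and> i \<in> set is} = length is"
    "card {j. j < dim_col A \<and> j \<in> set js} = length js"
    using assms(1,2) by (simp_all add: distinct_card strict_sorted_iff)
  then show "(\<lambda>(i, j). A $$ (pick (set is) i, pick (set js) j)) (k, l) =
      (\<lambda>(k, l). A $$ (is ! k, js ! l)) (k, l)"
    if "k < card {i. i < dim_row A \<and> i \<in> set is}" "l < card {j. j < dim_col A \<and> j \<in> set js}"
    for k l
    using that pick_sorted_list[OF assms(1)] pick_sorted_list[OF assms(2)] by simp
qed

lemma tot_1_submod_minor:
  assumes "tot_1_submod A" "sorted_wrt (<) is" "sorted_wrt (<) js"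
    and "set is \<subseteq> {..<dim_row A}" "set js \<subseteq> {..<dim_col A}" "length is = length js"
  shows "\<bar>det (mat (length is) (length js) (\<lambda>(k, l). A $$ (is ! k, js ! l)))\<bar> \<le> 1"
proof -
  have "card (set is) = card (set js)"
    using assms(2,3,6) by (simp add: distinct_card strict_sorted_iff)
  then have "\<bar>det (submatrix A (set is) (set js))\<bar> \<le> 1"
    using assms(1,4,5) unfolding tot_1_submod_def atLeast0LessThan by blast
  then show ?thesis
    by (simp only: submatrix_sorted_lists[OF assms(2-5)])
qed

lemma det_2x2:
  fixes A :: "'a :: comm_ring_1 mat"
  assumes "A \<in> carrier_mat 2 2"
  shows "det A = A $$ (0,0) * A $$ (1,1) - A $$ (0,1) * A $$ (1,0)"
proof -
  have del: "mat_delete A i 0 \<in> carrier_mat 1 1" for i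
    using mat_delete_carrier[OF assms, of i 0] by simp
  have "det A = A $$ (0,0) * cofactor A 0 0 + A $$ (1,0) * cofactor A 1 0"
    using laplace_expansion_column[OF assms, of 0] assms by (simp add: numeral_2_eq_2 lessThan_Suc)
  also have "cofactor A 0 0 = A $$ (1,1)"
    unfolding cofactor_def det_single[OF del] using assms by (simp add: mat_delete_def)
  also have "cofactor A 1 0 = - A $$ (0,1)"
    unfolding cofactor_def det_single[OF del] using assms by (simp add: mat_delete_def)
  finally show ?thesis
    by simp
qed

lemma det_3x3:
  fixes A :: "'a :: comm_ring_1 mat"
  assumes "A \<in> carrier_mat 3 3"
  shows "det A = A $$ (0,0) * (A $$ (1,1) * A $$ (2,2) - A $$ (1,2) * A $$ (2,1))
         - A $$ (1,0) * (A $$ (0,1) * A $$ (2,2) - A $$ (0,2) * A $$ (2,1))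
         + A $$ (2,0) * (A $$ (0,1) * A $$ (1,2) - A $$ (0,2) * A $$ (1,1))"
proof -
  have del: "mat_delete A i 0 \<in> carrier_mat 2 2" for i
    using mat_delete_carrier[OF assms, of i 0] by simp
  have "det A = (\<Sum>i<3. A $$ (i,0) * cofactor A i 0)"
    using laplace_expansion_column[OF assms, of 0] assms by simp
  also have "\<dots> = A $$ (0,0) * cofactor A 0 0 + A $$ (1,0) * cofactor A 1 0 + A $$ (2,0) * cofactor A 2 0"
    by (simp add: numeral_3_eq_3 lessThan_Suc numeral_2_eq_2)
  also have "cofactor A 0 0 = A $$ (1,1) * A $$ (2,2) - A $$ (1,2) * A $$ (2,1)"
    unfolding cofactor_def det_2x2[OF del] using assms by (simp add: mat_delete_def numeral_2_eq_2)
  also have "cofactor A 1 0 = - (A $$ (0,1) * A $$ (2,2) - A $$ (0,2) * A $$ (2,1))"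
    unfolding cofactor_def det_2x2[OF del] using assms by (simp add: mat_delete_def numeral_2_eq_2)
  also have "cofactor A 2 0 = A $$ (0,1) * A $$ (1,2) - A $$ (0,2) * A $$ (1,1)"
    unfolding cofactor_def det_2x2[OF del] using assms by (simp add: mat_delete_def numeral_2_eq_2)
  finally show ?thesis
    by (simp add: field_simps)
qed

lemma tot_1_submod_entry:
  assumes "tot_1_submod A" "i < dim_row A" "j < dim_col A"
  shows "\<bar>A $$ (i, j)\<bar> \<le> 1"
proof -
  have "\<bar>det (mat 1 1 (\<lambda>(k, l). A $$ ([i] ! k, [j] ! l)))\<bar> \<le> 1"
    using tot_1_submod_minor[OF assms(1), of "[i]" "[j]"] assms(2,3) by simp
  then show ?thesis
    by (simp add: det_single)
qed

lemma tot_1_submod_minor_2x2: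
  assumes "tot_1_submod A" "i0 < i1" "i1 < dim_row A" "j0 < j1" "j1 < dim_col A"
  shows "\<bar>A $$ (i0, j0) * A $$ (i1, j1) - A $$ (i0, j1) * A $$ (i1, j0)\<bar> \<le> 1"
proof -
  have "\<bar>det (mat 2 2 (\<lambda>(k, l). A $$ ([i0, i1] ! k, [j0, j1] ! l)))\<bar> \<le> 1"
    using tot_1_submod_minor[OF assms(1), of "[i0, i1]" "[j0, j1]"] assms(2-5)
    by (simp add: numeral_2_eq_2)
  then show ?thesis
    by (simp add: det_2x2)
qed

lemma tot_1_submod_minor_3x3:
  assumes "tot_1_submod A" "i0 < i1" "i1 < i2" "i2 < dim_row A" "j0 < j1" "j1 < j2" "j2 < dim_col A"
  shows "\<bar>A $$ (i0, j0) * (A $$ (i1, j1) * A $$ (i2, j2) - A $$ (i1, j2) * A $$ (i2, j1))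
          - A $$ (i1, j0) * (A $$ (i0, j1) * A $$ (i2, j2) - A $$ (i0, j2) * A $$ (i2, j1))
          + A $$ (i2, j0) * (A $$ (i0, j1) * A $$ (i1, j2) - A $$ (i0, j2) * A $$ (i1, j1))\<bar> \<le> 1"
proof -
  have "\<bar>det (mat 3 3 (\<lambda>(k, l). A $$ ([i0, i1, i2] ! k, [j0, j1, j2] ! l)))\<bar> \<le> 1"
    using tot_1_submod_minor[OF assms(1), of "[i0, i1, i2]" "[j0, j1, j2]"] assms(2-7)
    by (simp add: numeral_3_eq_3)
  then show ?thesis
    by (simp add: det_3x3)
qed

lemma add_col_sauer_S:
  "add_col (a, b, c) (sauer_S e1 e2 e3 e4) = mat_of_rows_list 8
     [[a, a + e1, a, a, a + e2, a + e3, a, a + e4],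
      [b, b, b - 1, b, b - 1, b, b - 1, b - 1],
      [c, c, c, c - 1, c, c - 1, c - 1, c - 1]]"
  by (rule eq_matI) (auto simp: add_col_def sauer_S_def mat_of_rows_list_def less_Suc_eq numeral_eq_Suc)

lemma add_col_sauer_S_first_eq_0:
  assumes "tot_1_submod (add_col (a, b, c) (sauer_S e1 e2 e3 e4))"
    and "0 \<le> a" "e1 = 1 \<or> e2 = 1 \<or> e3 = 1 \<or> e4 = 1"
  shows "a = 0"
proof -
  note entry = tot_1_submod_entry[OF assms(1)[unfolded add_col_sauer_S]]
  have "\<bar>a + e1\<bar> \<le> 1" "\<bar>a + e2\<bar> \<le> 1" "\<bar>a + e3\<bar> \<le> 1" "\<bar>a + e4\<bar> \<le> 1"
    using entry[of 0 1] entry[of 0 4] entry[of 0 5] entry[of 0 7]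
    by (simp_all add: mat_of_rows_list_def)
  then show ?thesis
    using assms(2,3) by auto
qed

lemma add_col_sauer_S_minors:
  assumes "tot_1_submod (add_col (0, b, c) (sauer_S e1 e2 e3 e4))"
  shows "\<bar>(e1 - e3) * b\<bar> \<le> 1" "\<bar>(e2 - e4) * (b - 1)\<bar> \<le> 1"
    and "\<bar>(e1 - e2) * c\<bar> \<le> 1" "\<bar>(e3 - e4) * (c - 1)\<bar> \<le> 1"
    and "\<bar>e2 * b + e3 * c\<bar> \<le> 1" "\<bar>e2 * (c - 1) + e3 * (b - 1)\<bar> \<le> 1"
    and "\<bar>e1 * (1 - b) + e4 * c\<bar> \<le> 1" "\<bar>e1 * (c - 1) - e4 * b\<bar> \<le> 1"
    and "\<bar>e1 * (b + c - 1) - e2 * b\<bar> \<le> 1" "\<bar>e3 * (b - 1) + e4 * (1 - b - c)\<bar> \<le> 1"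
    and "\<bar>e1 * (1 - b - c) + e3 * c\<bar> \<le> 1" "\<bar>e2 * (1 - c) + e4 * (b + c - 1)\<bar> \<le> 1"
proof -
  note T = assms[unfolded add_col_sauer_S]
  note minor2 = tot_1_submod_minor_2x2[OF T] and minor3 = tot_1_submod_minor_3x3[OF T]
  show "\<bar>(e1 - e3) * b\<bar> \<le> 1"
    using minor2[of 0 1 1 5] by (simp add: mat_of_rows_list_def algebra_simps)
  show "\<bar>(e2 - e4) * (b - 1)\<bar> \<le> 1"
    using minor2[of 0 1 4 7] by (simp add: mat_of_rows_list_def algebra_simps)
  show "\<bar>(e1 - e2) * c\<bar> \<le> 1"
    using minor2[of 0 2 1 4] by (simp add: mat_of_rows_list_def algebra_simps)
  show "\<bar>(e3 - e4) * (c - 1)\<bar> \<le> 1"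
    using minor2[of 0 2 5 7] by (simp add: mat_of_rows_list_def algebra_simps)
  show "\<bar>e2 * b + e3 * c\<bar> \<le> 1"
    using minor3[of 0 1 2 0 4 5] by (simp add: mat_of_rows_list_def algebra_simps)
  show "\<bar>e2 * (c - 1) + e3 * (b - 1)\<bar> \<le> 1"
    using minor3[of 0 1 2 4 5 6] by (simp add: mat_of_rows_list_def algebra_simps)
  show "\<bar>e1 * (1 - b) + e4 * c\<bar> \<le> 1"
    using minor3[of 0 1 2 1 2 7] by (simp add: mat_of_rows_list_def algebra_simps)
  show "\<bar>e1 * (c - 1) - e4 * b\<bar> \<le> 1"
    using minor3[of 0 1 2 1 3 7] by (simp add: mat_of_rows_list_def algebra_simps)
  show "\<bar>e1 * (b + c - 1) - e2 * b\<bar> \<le> 1"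
    using minor3[of 0 1 2 1 3 4] by (simp add: mat_of_rows_list_def algebra_simps)
  show "\<bar>e3 * (b - 1) + e4 * (1 - b - c)\<bar> \<le> 1"
    using minor3[of 0 1 2 2 5 7] by (simp add: mat_of_rows_list_def algebra_simps)
  show "\<bar>e1 * (1 - b - c) + e3 * c\<bar> \<le> 1"
    using minor3[of 0 1 2 1 2 5] by (simp add: mat_of_rows_list_def algebra_simps)
  show "\<bar>e2 * (1 - c) + e4 * (b + c - 1)\<bar> \<le> 1"
    using minor3[of 0 1 2 3 4 7] by (simp add: mat_of_rows_list_def algebra_simps)
qed

lemma add_col_sauer_S_alternating_signs:
  assumes "tot_1_submod (add_col (0, b, c) (sauer_S e1 e2 e3 e4))"
    and "(e1, e2, e3, e4) \<in> {(1, -1, 1, -1), (-1, 1, -1, 1)}"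
  shows "c = 1/2 \<and> 1/4 \<le> b \<and> b \<le> 3/4"
  using add_col_sauer_S_minors(3,4,9,10)[OF assms(1)] assms(2) by (auto simp: abs_le_iff)

lemma add_col_sauer_S_paired_signs:
  assumes "tot_1_submod (add_col (0, b, c) (sauer_S e1 e2 e3 e4))"
    and "(e1, e2, e3, e4) \<in> {(1, 1, -1, -1), (-1, -1, 1, 1)}"
  shows "b = 1/2 \<and> 1/4 \<le> c \<and> c \<le> 3/4"
  using add_col_sauer_S_minors(1,2,11,12)[OF assms(1)] assms(2) by (auto simp: abs_le_iff)

lemma add_col_sauer_S_other_signs:
  assumes "tot_1_submod (add_col (0, b, c) (sauer_S e1 e2 e3 e4))"
    and "e1 \<in> {-1, 1}" "e2 \<in> {-1, 1}" "e3 \<in> {-1, 1}" "e4 \<in> {-1, 1}"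
    and "(e1, e2, e3, e4) \<notin> {(1, -1, 1, -1), (-1, 1, -1, 1), (1, 1, -1, -1), (-1, -1, 1, 1)}"
  shows "b = 1/2 \<and> c = 1/2"
  \<comment> \<open>On the sign patterns where the 2x2 minors leave a bound open, the 3x3 minors used here
    reduce to \<open>b + c\<close>, \<open>b + c - 2\<close>, \<open>1 - b + c\<close> and \<open>1 + b - c\<close> up to sign.\<close>
  using add_col_sauer_S_minors(1-8)[OF assms(1)] assms(2-6) by (auto simp: abs_le_iff)

lemma convex_hull_2I:
  fixes p q :: "'a :: real_vector"
  assumes "0 \<le> u" "u \<le> 1" "x = (1 - u) *\<^sub>R p + u *\<^sub>R q"
  shows "x \<in> convex hull {p, q}"
proof -
  have "x = (1 - u) *\<^sub>R p + u *\<^sub>R q \<and> 0 \<le> 1 - u \<and> 0 \<le> u \<and> (1 - u) + u = 1"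
    using assms by simp
  then show ?thesis
    unfolding convex_hull_2 by blast
qed

theorem proposition4p2:
  fixes e1 e2 e3 e4 :: real and r :: "real \<times> real \<times> real"
  assumes "e1 \<in> {-1, 1}" "e2 \<in> {-1, 1}" "e3 \<in> {-1, 1}" "e4 \<in> {-1, 1}"
    and "e1 = 1 \<or> e2 = 1 \<or> e3 = 1 \<or> e4 = 1"
    and "fst r \<in> {0..<1}" "fst (snd r) \<in> {0..<1}" "snd (snd r) \<in> {0..<1}"
    and "tot_1_submod (add_col r (sauer_S e1 e2 e3 e4))"
  shows "((e1, e2, e3, e4) \<in> {(1, -1, 1, -1), (-1, 1, -1, 1)} \<longrightarrow>
            r \<in> convex hull {(0, 1/4, 1/2), (0, 3/4, 1/2)})
       \<and> ((e1, e2, e3, e4) \<in> {(1, 1, -1, -1), (-1, -1, 1, 1)} \<longrightarrow>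
            r \<in> convex hull {(0, 1/2, 1/4), (0, 1/2, 3/4)})
       \<and> ((e1, e2, e3, e4) \<notin> {(1, -1, 1, -1), (-1, 1, -1, 1), (1, 1, -1, -1), (-1, -1, 1, 1)} \<longrightarrow>
            r = (0, 1/2, 1/2))"
proof -
  obtain a b c where r: "r = (a, b, c)"
    using prod_cases3 by blast
  have "a = 0"
    using add_col_sauer_S_first_eq_0 assms(5,6,9) unfolding r by auto
  then have T: "tot_1_submod (add_col (0, b, c) (sauer_S e1 e2 e3 e4))"
    using assms(9) unfolding r by simp
  show ?thesis
    unfolding r \<open>a = 0\<close>
  proof (intro conjI impI)
    assume "(e1, e2, e3, e4) \<in> {(1, -1, 1, -1), (-1, 1, -1, 1)}"
    then have "c = 1/2 \<and> 1/4 \<le> b \<and> b \<le> 3/4"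
      by (rule add_col_sauer_S_alternating_signs[OF T])
    then show "(0, b, c) \<in> convex hull {(0, 1/4, 1/2), (0, 3/4, 1/2)}"
      by (intro convex_hull_2I[where u = "2 * b - 1/2"]) (auto simp: algebra_simps)
  next
    assume "(e1, e2, e3, e4) \<in> {(1, 1, -1, -1), (-1, -1, 1, 1)}"
    then have "b = 1/2 \<and> 1/4 \<le> c \<and> c \<le> 3/4"
      by (rule add_col_sauer_S_paired_signs[OF T])
    then show "(0, b, c) \<in> convex hull {(0, 1/2, 1/4), (0, 1/2, 3/4)}"
      by (intro convex_hull_2I[where u = "2 * c - 1/2"]) (auto simp: algebra_simps)
  next
    assume "(e1, e2, e3, e4) \<notin> {(1, -1, 1, -1), (-1, 1, -1, 1), (1, 1, -1, -1), (-1, -1, 1, 1)}"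
    then show "(0, b, c) = (0, 1/2, 1/2)"
      using add_col_sauer_S_other_signs[OF T assms(1-4)] by simp
  qed
qed

end
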